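(* Let $N=(V,E)$ be a tree-child phylogenetic network such that no two parents of a hybrid node are connected by a path. For all nodes $u,v\in V$ with $C(u)\neq C(v)$, the following are equivalent: (i) there is a non-trivial path $u\rightsquigarrow v$; (ii) $C(v)\subsetneq C(u)$.
   Context: A DAG is labeled in a finite set $S$ if its leaves (out-degree 0) are bijectively labeled by $S$. A tree node has in-degree at most 1; a hybrid node has in-degree greater than 1; a tree child of a node is a child that is a tree node. A tree-child phylogenetic network is a rooted DAG labeled in $S$ in which every non-leaf node has at least one tree child, no tree node has out-degree 1, and every hybrid node has out-degree exactly 1. The condition that no two parents of a hybrid node are connected by a path means: if $u_1,u_2$ are the parents of a hybrid node, there is no path $u_1\rightsquigarrow u_2$ nor $u_2\rightsquigarrow u_1$. A path is non-trivial if it has length at least 1. $C(u)$ is the set of leaves that are descendants of $u$. *)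

theory Defs
  imports Main
begin

text \<open>A directed graph is a vertex set V with an edge relation E \<subseteq> V \<times> V.
  A path u \<leadsto> v is (u,v) in rtrancl E; a non-trivial path (length at least 1) is (u,v) in trancl E.\<close>

definition indeg :: "('a \<times> 'a) set \<Rightarrow> 'a \<Rightarrow> nat" where
  "indeg E v = card {u. (u, v) \<in> E}"

definition outdeg :: "('a \<times> 'a) set \<Rightarrow> 'a \<Rightarrow> nat" where
  "outdeg E v = card {w. (v, w) \<in> E}"

definition dag :: "'a set \<Rightarrow> ('a \<times> 'a) set \<Rightarrow> bool" where
  "dag V E \<longleftrightarrow> finite V \<and> E \<subseteq> V \<times> V \<and> acyclic E"

definition rooted :: "'a set \<Rightarrow> ('a \<times> 'a) set \<Rightarrow> bool" where
  "rooted V E \<longleftrightarrow> (\<exists>r\<in>V. indeg E r = 0 \<and> (\<forall>v\<in>V. (r, v) \<in> E\<^sup>*))"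

definition leaves :: "'a set \<Rightarrow> ('a \<times> 'a) set \<Rightarrow> 'a set" where
  "leaves V E = {v \<in> V. outdeg E v = 0}"

definition labeled_in :: "'a set \<Rightarrow> ('a \<times> 'a) set \<Rightarrow> 'b set \<Rightarrow> bool" where
  "labeled_in V E S \<longleftrightarrow> (\<exists>lab. bij_betw lab (leaves V E) S)"

definition tree_node :: "('a \<times> 'a) set \<Rightarrow> 'a \<Rightarrow> bool" where
  "tree_node E v \<longleftrightarrow> indeg E v \<le> 1"

definition hybrid_node :: "('a \<times> 'a) set \<Rightarrow> 'a \<Rightarrow> bool" where
  "hybrid_node E v \<longleftrightarrow> indeg E v > 1"

definition tree_child_network :: "'a set \<Rightarrow> ('a \<times> 'a) set \<Rightarrow> 'b set \<Rightarrow> bool" where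
  "tree_child_network V E S \<longleftrightarrow>
     dag V E \<and> rooted V E \<and> labeled_in V E S \<and>
     (\<forall>v\<in>V. v \<notin> leaves V E \<longrightarrow> (\<exists>w. (v, w) \<in> E \<and> tree_node E w)) \<and>
     (\<forall>v\<in>V. tree_node E v \<longrightarrow> outdeg E v \<noteq> 1) \<and>
     (\<forall>v\<in>V. hybrid_node E v \<longrightarrow> outdeg E v = 1)"

definition no_parents_path :: "'a set \<Rightarrow> ('a \<times> 'a) set \<Rightarrow> bool" where
  "no_parents_path V E \<longleftrightarrow>
     (\<forall>h\<in>V. hybrid_node E h \<longrightarrow>
        (\<forall>u1 u2. (u1, h) \<in> E \<and> (u2, h) \<in> E \<and> u1 \<noteq> u2 \<longrightarrow> (u1, u2) \<notin> E\<^sup>*))"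

definition C :: "'a set \<Rightarrow> ('a \<times> 'a) set \<Rightarrow> 'a \<Rightarrow> 'a set" where
  "C V E u = {x \<in> leaves V E. (u, x) \<in> E\<^sup>*}"

end

theory Submission
  imports Defs
begin

text \<open>In a tree-child network every node v reaches a leaf l along edges into tree nodes. Any
  ancestor u of l lies on that path or above v, because a tree node has only one parent; so
  if C(v) \<subset> C(u), then u is an ancestor of v, and u \<noteq> v since C(u) \<noteq> C(v). The converse is
  monotonicity of C along paths.\<close>

definition tree_edges :: "('a \<times> 'a) set \<Rightarrow> ('a \<times> 'a) set" where
  "tree_edges E = {(x, y). (x, y) \<in> E \<and> tree_node E y}"

lemma tree_edges_subset: "tree_edges E \<subseteq> E"
  by (auto simp: tree_edges_def)

lemma tree_child_network_graph:
  assumes "tree_child_network V E S"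
  shows "finite E" "acyclic E" "E \<subseteq> V \<times> V"
proof -
  have "finite V" "E \<subseteq> V \<times> V" "acyclic E"
    using assms by (auto simp: tree_child_network_def dag_def)
  then show "finite E" "acyclic E" "E \<subseteq> V \<times> V"
    by (auto intro: finite_subset)
qed

lemma C_antimono:
  assumes "(u, v) \<in> E\<^sup>*"
  shows "C V E v \<subseteq> C V E u"
  using assms by (auto simp: C_def)

lemma tree_node_parent_unique:
  assumes "finite E" "tree_node E w" "(p, w) \<in> E" "(q, w) \<in> E"
  shows "p = q"
proof -
  have "finite {a. (a, w) \<in> E}"
    using finite_imageI[OF assms(1), of fst] by (rule finite_subset[rotated]) force
  moreover have "card {a. (a, w) \<in> E} \<le> Suc 0"
    using assms(2) by (simp add: tree_node_def indeg_def)
  ultimately show ?thesis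
    using assms(3,4) card_le_Suc0_iff_eq by blast
qed

lemma tree_path_to_leaf:
  assumes "finite E" "acyclic E" "E \<subseteq> V \<times> V"
    and tree_child: "\<forall>v\<in>V. v \<notin> leaves V E \<longrightarrow> (\<exists>w. (v, w) \<in> E \<and> tree_node E w)"
    and "v \<in> V"
  shows "\<exists>l\<in>leaves V E. (v, l) \<in> (tree_edges E)\<^sup>*"
  using \<open>v \<in> V\<close>
proof (induction v rule: wf_induct[OF finite_acyclic_wf_converse[OF assms(1,2)]])
  case (1 v)
  show ?case
  proof (cases "v \<in> leaves V E")
    case False
    then obtain w where w: "(v, w) \<in> E" "tree_node E w"
      using tree_child \<open>v \<in> V\<close> by blast
    with \<open>E \<subseteq> V \<times> V\<close> 1(1) obtain l where "l \<in> leaves V E" "(w, l) \<in> (tree_edges E)\<^sup>*"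
      by blast
    moreover have "(v, w) \<in> tree_edges E"
      using w by (simp add: tree_edges_def)
    ultimately show ?thesis
      by (meson converse_rtrancl_into_rtrancl)
  qed blast
qed

lemma ancestor_of_tree_path:
  assumes "finite E"
    and "(v, x) \<in> (tree_edges E)\<^sup>*" "(u, x) \<in> E\<^sup>*"
  shows "(u, v) \<in> E\<^sup>* \<or> (v, u) \<in> E\<^sup>+"
  using assms(2)
proof (induction rule: converse_rtrancl_induct)
  case base
  then show ?case using assms(3) by blast
next
  case (step v w)
  then have vw: "(v, w) \<in> E" "tree_node E w"
    by (auto simp: tree_edges_def)
  from step.IH show ?case
  proof
    assume "(u, w) \<in> E\<^sup>*"
    then consider "u = w" | p where "(u, p) \<in> E\<^sup>*" "(p, w) \<in> E"
      by (meson rtranclD tranclD2)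
    then show ?thesis
    proof cases
      case (2 p)
      with tree_node_parent_unique[OF assms(1) vw(2)] vw(1) have "p = v"
        by blast
      with 2 show ?thesis by blast
    qed (use vw in blast)
  qed (use vw in \<open>meson trancl_into_trancl2\<close>)
qed

theorem lemma6:
  fixes V :: "'a set" and E :: "('a \<times> 'a) set" and S :: "'b set"
  assumes "tree_child_network V E S"
    and "no_parents_path V E"
    and "u \<in> V" and "v \<in> V"
    and "C V E u \<noteq> C V E v"
  shows "(u, v) \<in> E\<^sup>+ \<longleftrightarrow> C V E v \<subset> C V E u"
proof
  assume "(u, v) \<in> E\<^sup>+"
  then have "C V E v \<subseteq> C V E u"
    by (rule C_antimono[OF trancl_into_rtrancl])
  with assms(5) show "C V E v \<subset> C V E u"
    by blast
next
  assume sub: "C V E v \<subset> C V E u"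
  note graph = tree_child_network_graph[OF assms(1)]
  obtain l where l: "l \<in> leaves V E" "(v, l) \<in> (tree_edges E)\<^sup>*"
    using tree_path_to_leaf[OF graph _ assms(4)] assms(1)
    by (auto simp: tree_child_network_def)
  then have "l \<in> C V E v"
    using rtrancl_mono[OF tree_edges_subset] by (auto simp: C_def)
  with sub have "(u, l) \<in> E\<^sup>*"
    by (auto simp: C_def)
  from ancestor_of_tree_path[OF graph(1) l(2) this] show "(u, v) \<in> E\<^sup>+"
  proof
    assume "(u, v) \<in> E\<^sup>*"
    moreover have "u \<noteq> v"
      using assms(5) by blast
    ultimately show ?thesis
      by (meson rtranclD)
  next
    assume "(v, u) \<in> E\<^sup>+"
    then have "C V E u \<subseteq> C V E v"
      by (rule C_antimono[OF trancl_into_rtrancl])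
    with sub show ?thesis
      by blast
  qed
qed

end
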